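(* Let $H=(E,\{X_i:i\in[n]\})$ be a hypergraph and $t_1,\dots,t_n$ integers with $0\le t_i\le|X_i|$ satisfying: (H1) every vertex lies in at least two hyperedges; (H2) $|X_i\cap X_j|\le1$ for all distinct $i,j$; (H3) there are no $a,b,c\in E$ with $\{a,b\},\{a,c\},\{b,c\}$ all hyperedges; (T) for each $i$, either $t_i=1$ or $\min\{w(e):e\in X_i\}\le t_i<|X_i|$. Let $\rho(A)=\sum_{i=1}^n\min\{|A\cap X_i|,t_i\}$ for $A\subseteq E$. If the line graph $G_H$ is $(k+1)$-critical, then $\rho$ is an excluded minor for $\mathcal{D}_k$.
   Context: A polymatroid on a finite set $E$ is a function $\rho:2^E\to\mathbb{Z}$ that is normalized, non-decreasing and submodular. A hypergraph is $H=(E,\mathcal{E})$ with $E$ finite and $\mathcal{E}=\{X_i:i\in[n]\}$ a set of nonempty subsets of $E$; $w(e)$ is the number of hyperedges containing $e$. The line graph $G_H$ has vertex set $[n]$ with $ij$ an edge iff $i\ne j$ and $X_i\cap X_j\ne\emptyset$. A graph is $(k+1)$-critical if it has chromatic number $k+1$ but deleting any single edge gives chromatic number $k$. $\mathcal{D}_k$ is the class of polymatroids that can be written as $r_{M_1}+\cdots+r_{M_k}$ for matroids $M_1,\dots,M_k$ on the ground set. For $A\subseteq E$, the deletion $\rho_{\backslash A}$ and contraction $\rho_{/A}$ on $E-A$ are $\rho_{\backslash A}(X)=\rho(X)$ and $\rho_{/A}(X)=\rho(X\cup A)-\rho(A)$; minors are $(\rho_{\backslash A})_{/B}$ for disjoint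 $A,B$, proper if $A\cup B\ne\emptyset$. An excluded minor for a minor-closed class is a polymatroid not in the class all of whose proper minors are in the class. *)

theory Defs
  imports Main
begin

definition polymatroid :: "'a set \<Rightarrow> ('a set \<Rightarrow> int) \<Rightarrow> bool" where
  "polymatroid E \<rho> \<longleftrightarrow> finite E \<and> \<rho> {} = 0
     \<and> (\<forall>X Y. X \<subseteq> Y \<and> Y \<subseteq> E \<longrightarrow> \<rho> X \<le> \<rho> Y)
     \<and> (\<forall>X Y. X \<subseteq> E \<and> Y \<subseteq> E \<longrightarrow> \<rho> (X \<union> Y) + \<rho> (X \<inter> Y) \<le> \<rho> X + \<rho> Y)"

definition matroid_rank :: "'a set \<Rightarrow> ('a set \<Rightarrow> int) \<Rightarrow> bool" where
  "matroid_rank E r \<longleftrightarrow> polymatroid E r \<and> (\<forall>X. X \<subseteq> E \<longrightarrow> r X \<le> int (card X))"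

definition in_D :: "nat \<Rightarrow> 'a set \<Rightarrow> ('a set \<Rightarrow> int) \<Rightarrow> bool" where
  "in_D k E \<rho> \<longleftrightarrow> (\<exists>r :: nat \<Rightarrow> 'a set \<Rightarrow> int.
      (\<forall>j<k. matroid_rank E (r j)) \<and> (\<forall>X. X \<subseteq> E \<longrightarrow> \<rho> X = (\<Sum>j<k. r j X)))"

text \<open>The minor (rho deleted A) contracted B, a function on ground set E - A - B.\<close>
definition minor_fun :: "('a set \<Rightarrow> int) \<Rightarrow> 'a set \<Rightarrow> 'a set \<Rightarrow> int" where
  "minor_fun \<rho> B = (\<lambda>X. \<rho> (X \<union> B) - \<rho> B)"

definition excluded_minor_D :: "nat \<Rightarrow> 'a set \<Rightarrow> ('a set \<Rightarrow> int) \<Rightarrow> bool" where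
  "excluded_minor_D k E \<rho> \<longleftrightarrow> polymatroid E \<rho> \<and> \<not> in_D k E \<rho>
     \<and> (\<forall>A B. A \<subseteq> E \<and> B \<subseteq> E \<and> A \<inter> B = {} \<and> A \<union> B \<noteq> {}
            \<longrightarrow> in_D k (E - A - B) (minor_fun \<rho> B))"

definition colourable :: "'v set \<Rightarrow> ('v \<Rightarrow> 'v \<Rightarrow> bool) \<Rightarrow> nat \<Rightarrow> bool" where
  "colourable V adj k \<longleftrightarrow> (\<exists>f :: 'v \<Rightarrow> nat. (\<forall>v\<in>V. f v < k)
      \<and> (\<forall>u\<in>V. \<forall>v\<in>V. adj u v \<longrightarrow> f u \<noteq> f v))"

definition chromatic_number :: "'v set \<Rightarrow> ('v \<Rightarrow> 'v \<Rightarrow> bool) \<Rightarrow> nat" where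
  "chromatic_number V adj = (LEAST k. colourable V adj k)"

definition delete_edge :: "('v \<Rightarrow> 'v \<Rightarrow> bool) \<Rightarrow> 'v \<Rightarrow> 'v \<Rightarrow> ('v \<Rightarrow> 'v \<Rightarrow> bool)" where
  "delete_edge adj u v = (\<lambda>x y. adj x y \<and> {x, y} \<noteq> {u, v})"

definition critical :: "nat \<Rightarrow> 'v set \<Rightarrow> ('v \<Rightarrow> 'v \<Rightarrow> bool) \<Rightarrow> bool" where
  "critical m V adj \<longleftrightarrow> chromatic_number V adj = m
     \<and> (\<forall>u\<in>V. \<forall>v\<in>V. adj u v \<longrightarrow> chromatic_number V (delete_edge adj u v) = m - 1)"

definition hypergraph :: "'a set \<Rightarrow> nat \<Rightarrow> (nat \<Rightarrow> 'a set) \<Rightarrow> bool" where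
  "hypergraph E n X \<longleftrightarrow> finite E \<and> inj_on X {1..n}
     \<and> (\<forall>i\<in>{1..n}. X i \<noteq> {} \<and> X i \<subseteq> E)"

definition hdeg :: "nat \<Rightarrow> (nat \<Rightarrow> 'a set) \<Rightarrow> 'a \<Rightarrow> nat" where
  "hdeg n X e = card {i \<in> {1..n}. e \<in> X i}"

definition line_graph_adj :: "(nat \<Rightarrow> 'a set) \<Rightarrow> nat \<Rightarrow> nat \<Rightarrow> bool" where
  "line_graph_adj X i j \<longleftrightarrow> i \<noteq> j \<and> X i \<inter> X j \<noteq> {}"

definition truncated_rho :: "nat \<Rightarrow> (nat \<Rightarrow> 'a set) \<Rightarrow> (nat \<Rightarrow> int) \<Rightarrow> 'a set \<Rightarrow> int" where
  "truncated_rho n X t A = (\<Sum>i\<in>{1..n}. min (int (card (A \<inter> X i))) (t i))"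

end

theory Submission
  imports Defs
begin

text \<open>
  Deleting or contracting an element \<open>e\<close> changes only the hyperedges through \<open>e\<close>.  Colouring the
  line graph with one edge between two of them removed, which is possible with \<open>k\<close> colours by
  criticality, splits the minor into \<open>k\<close> partition matroids, one per colour class.

  Conversely, let \<open>\<rho> = r\<^sub>1 + \<dots> + r\<^sub>k\<close> with matroid rank functions \<open>r\<^sub>j\<close>.  Contracting \<open>E - X\<^sub>i\<close>
  leaves the connected uniform matroid \<open>U(t\<^sub>i, |X\<^sub>i|)\<close>, so exactly one \<open>r\<^sub>j\<close> survives on \<open>X\<^sub>i\<close>; call
  \<open>j\<close> the colour of \<open>X\<^sub>i\<close>.  The dual nullities \<open>r\<^sub>j(E) - r\<^sub>j(E - A)\<close> are supermodular and add up
  to \<open>\<rho>(E) - \<rho>(E - A)\<close>, which can be computed hyperedge by hyperedge.  Comparing the two for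
  small sets \<open>A\<close> shows that intersecting hyperedges get different colours, so the line graph would
  be \<open>k\<close>-colourable.  A hyperedge \<open>{e}\<close> is handled by the degree bound for critical graphs,
  since \<open>w(e) = \<rho>({e}) \<le> k\<close>.
\<close>

section \<open>Matroid rank functions\<close>

lemma matroid_rank_empty: "matroid_rank E r \<Longrightarrow> r {} = 0"
  unfolding matroid_rank_def polymatroid_def by blast

lemma matroid_rank_mono: "matroid_rank E r \<Longrightarrow> A \<subseteq> B \<Longrightarrow> B \<subseteq> E \<Longrightarrow> r A \<le> r B"
  unfolding matroid_rank_def polymatroid_def by blast

lemma matroid_rank_submod:
  "matroid_rank E r \<Longrightarrow> A \<subseteq> E \<Longrightarrow> B \<subseteq> E \<Longrightarrow> r (A \<union> B) + r (A \<inter> B) \<le> r A + r B"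
  unfolding matroid_rank_def polymatroid_def by blast

lemma matroid_rank_le_card: "matroid_rank E r \<Longrightarrow> A \<subseteq> E \<Longrightarrow> r A \<le> int (card A)"
  unfolding matroid_rank_def by blast

lemma matroid_rank_nonneg: "matroid_rank E r \<Longrightarrow> A \<subseteq> E \<Longrightarrow> 0 \<le> r A"
  using matroid_rank_mono[of E r "{}" A] matroid_rank_empty[of E r] by auto

lemma matroid_rank_insert_le:
  assumes "matroid_rank E r" "B \<subseteq> E" "x \<in> E"
  shows "r (insert x B) \<le> r B + 1"
proof -
  have "r (B \<union> {x}) + r (B \<inter> {x}) \<le> r B + r {x}"
    using matroid_rank_submod assms by blast
  moreover have "r {x} \<le> 1" using matroid_rank_le_card[of E r "{x}"] assms by auto
  moreover have "0 \<le> r (B \<inter> {x})" using matroid_rank_nonneg[of E r "B \<inter> {x}"] assms by auto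
  ultimately show ?thesis by simp
qed

lemma matroid_rank_Un_loops:
  assumes r: "matroid_rank E r" and "finite S" "C \<union> S \<subseteq> E" and loops: "\<forall>x\<in>S. r {x} = 0"
  shows "r (C \<union> S) = r C"
  using \<open>finite S\<close> \<open>C \<union> S \<subseteq> E\<close> loops
proof (induction S rule: finite_induct)
  case empty
  then show ?case by simp
next
  case (insert x S)
  have "r (C \<union> insert x S) + r ((C \<union> S) \<inter> {x}) \<le> r (C \<union> S) + r {x}"
    using matroid_rank_submod[OF r, of "C \<union> S" "{x}"] insert.prems(1) by auto
  moreover have "0 \<le> r ((C \<union> S) \<inter> {x})"
    by (rule matroid_rank_nonneg[OF r]) (use insert.prems(1) in auto)
  moreover have "r (C \<union> S) \<le> r (C \<union> insert x S)"
    by (rule matroid_rank_mono[OF r]) (use insert.prems in auto)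
  ultimately show ?case using insert by auto
qed

lemma matroid_rank_loops:
  assumes "matroid_rank E r" "finite S" "S \<subseteq> E" "\<forall>x\<in>S. r {x} = 0"
  shows "r S = 0"
  using matroid_rank_Un_loops[OF assms(1,2), of "{}"] assms(3,4) matroid_rank_empty[OF assms(1)] by simp

lemma matroid_rank_nonloops:
  assumes "matroid_rank E r" "finite Y" "Y \<subseteq> E"
  shows "r Y = r {x \<in> Y. r {x} \<noteq> 0}"
proof -
  let ?N = "{x \<in> Y. r {x} \<noteq> 0}" and ?L = "{x \<in> Y. r {x} = 0}"
  have "r (?N \<union> ?L) = r ?N" by (rule matroid_rank_Un_loops[OF assms(1)]) (use assms(2,3) in auto)
  moreover have "?N \<union> ?L = Y" by auto
  ultimately show ?thesis by simp
qed

lemma matroid_rank_minor: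
  assumes r: "matroid_rank E r" and B: "B \<subseteq> E"
  shows "matroid_rank (E - A - B) (minor_fun r B)"
  unfolding matroid_rank_def polymatroid_def minor_fun_def
proof (intro conjI allI impI)
  show "finite (E - A - B)" using r unfolding matroid_rank_def polymatroid_def by auto
  show "r ({} \<union> B) - r B = 0" by simp
next
  fix Z W assume "Z \<subseteq> W \<and> W \<subseteq> E - A - B"
  then show "r (Z \<union> B) - r B \<le> r (W \<union> B) - r B"
    using matroid_rank_mono[OF r, of "Z \<union> B" "W \<union> B"] B by auto
next
  fix Z W assume "Z \<subseteq> E - A - B \<and> W \<subseteq> E - A - B"
  then have "Z \<union> B \<subseteq> E" "W \<union> B \<subseteq> E" using B by auto
  moreover have "(Z \<union> B) \<union> (W \<union> B) = Z \<union> W \<union> B" "(Z \<union> B) \<inter> (W \<union> B) = Z \<inter> W \<union> B" by auto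
  ultimately show "r (Z \<union> W \<union> B) - r B + (r (Z \<inter> W \<union> B) - r B) \<le> r (Z \<union> B) - r B + (r (W \<union> B) - r B)"
    using matroid_rank_submod[OF r, of "Z \<union> B" "W \<union> B"] by simp
next
  fix Z assume Z: "Z \<subseteq> E - A - B"
  then have "r (Z \<union> B) + r (Z \<inter> B) \<le> r Z + r B" "Z \<inter> B = {}" "r Z \<le> int (card Z)"
    using matroid_rank_submod[OF r, of Z B] matroid_rank_le_card[OF r, of Z] B by auto
  then show "r (Z \<union> B) - r B \<le> int (card Z)"
    using matroid_rank_empty[OF r] by simp
qed

lemma add_le_sum_nonneg:
  fixes f :: "'i \<Rightarrow> int"
  assumes "finite K" "a \<in> K" "b \<in> K" "a \<noteq> b" "\<forall>j\<in>K. 0 \<le> f j"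
  shows "f a + f b \<le> sum f K"
proof -
  have "sum f {a, b} \<le> sum f K" by (rule sum_mono2) (use assms in auto)
  then show ?thesis using assms(4) by simp
qed

text \<open>The uniform matroid \<open>U(t, |Y|)\<close> with \<open>0 < t < |Y|\<close> is connected, so it is not a sum
  of two nonzero matroid rank functions.  The elements of \<open>Y\<close> that are not loops of one nonzero
  summand \<open>r j\<^sub>1\<close> form a separator \<open>P\<close>, which would force \<open>min |P| t + min |Y - P| t \<le> t\<close>.\<close>
lemma uniform_rank_sum_unique_nonzero:
  fixes r :: "nat \<Rightarrow> 'a set \<Rightarrow> int"
  assumes r: "\<forall>j<k. matroid_rank Y (r j)"
    and sum_r: "\<forall>S. S \<subseteq> Y \<longrightarrow> (\<Sum>j<k. r j S) = min (int (card S)) t"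
    and t: "1 \<le> t" "t < int (card Y)"
  shows "\<exists>!j. j < k \<and> r j Y \<noteq> 0"
proof -
  have finY: "finite Y" using t card_ge_0_finite by force
  have nonneg: "0 \<le> r j S" if "j < k" "S \<subseteq> Y" for j S
    using matroid_rank_nonneg r that by blast
  have "\<exists>j<k. r j Y \<noteq> 0"
  proof (rule ccontr)
    assume "\<not> ?thesis"
    then show False using sum_r[rule_format, of Y] t by simp
  qed
  moreover have False if j1: "j1 < k" "r j1 Y \<noteq> 0" and j2: "j2 < k" "r j2 Y \<noteq> 0" "j2 \<noteq> j1"
    for j1 j2
  proof -
    have rj1: "matroid_rank Y (r j1)" using r j1 by blast
    define P where "P = {x \<in> Y. r j1 {x} \<noteq> 0}"
    define Q where "Q = Y - P"
    have PQ: "P \<subseteq> Y" "Q \<subseteq> Y" "P \<union> Q = Y" "P \<inter> Q = {}" unfolding P_def Q_def by auto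
    have fin: "finite P" "finite Q" using finY PQ finite_subset by auto
    have P_loop: "\<forall>x\<in>P. r j {x} = 0" if "j < k" "j \<noteq> j1" for j
    proof
      fix x assume "x \<in> P"
      have "r j1 {x} \<le> 1" using matroid_rank_le_card[OF rj1, of "{x}"] \<open>x \<in> P\<close> PQ by auto
      moreover have "r j1 {x} + r j {x} \<le> (\<Sum>j<k. r j {x})"
        by (rule add_le_sum_nonneg) (use that \<open>x \<in> P\<close> j1 nonneg PQ in auto)
      ultimately show "r j {x} = 0"
        using sum_r nonneg[of j1 "{x}"] nonneg[of j "{x}"] \<open>x \<in> P\<close> that j1 t P_def by auto
    qed
    have P_other: "r j P = 0" if "j < k" "j \<noteq> j1" for j
      using matroid_rank_loops[OF _ fin(1) PQ(1) P_loop[OF that]] r that by blast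
    have "\<forall>x\<in>Q. r j1 {x} = 0" unfolding Q_def P_def by blast
    then have Q_j1: "r j1 Q = 0" using matroid_rank_loops[OF rj1 fin(2) PQ(2)] by blast
    have Y_j1: "r j1 Y = r j1 P" using matroid_rank_nonloops[OF rj1 finY] unfolding P_def by simp
    have "P \<noteq> {}" using Y_j1 j1 matroid_rank_empty[OF rj1] by auto
    moreover have "Q \<noteq> {}" using P_other[OF j2(1,3)] j2 PQ by auto
    moreover have "(\<Sum>j<k. r j P) + (\<Sum>j<k. r j Q) \<le> (\<Sum>j<k. r j Y)"
    proof -
      have "r j P + r j Q \<le> r j Y" if "j < k" for j
        using Y_j1 Q_j1 P_other[OF that] matroid_rank_mono[of Y "r j" Q Y] r that PQ
        by (cases "j = j1") auto
      then show ?thesis unfolding sum.distrib[symmetric] by (intro sum_mono) auto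
    qed
    moreover have "card P + card Q = card Y" using card_Un_disjoint[OF fin PQ(4)] PQ(3) by simp
    ultimately have "min (int (card P)) t + min (int (card Q)) t \<le> t" "1 \<le> card P" "1 \<le> card Q"
      using sum_r[rule_format, OF PQ(1)] sum_r[rule_format, OF PQ(2)] sum_r[rule_format, of Y] t fin
      by (simp_all add: Suc_le_eq card_gt_0_iff)
    then show False using \<open>card P + card Q = card Y\<close> t by linarith
  qed
  ultimately show ?thesis by blast
qed

section \<open>The class \<open>D\<^sub>k\<close> and its minors\<close>

lemma in_D_cong:
  assumes "in_D k E f" "\<forall>A. A \<subseteq> E \<longrightarrow> g A = f A"
  shows "in_D k E g"
  using assms unfolding in_D_def by metis

lemma in_D_minor:
  assumes f: "in_D k E f" and B: "B \<subseteq> E"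
  shows "in_D k (E - A - B) (minor_fun f B)"
proof -
  obtain r where r: "\<forall>j<k. matroid_rank E (r j)" "\<forall>Z. Z \<subseteq> E \<longrightarrow> f Z = (\<Sum>j<k. r j Z)"
    using f unfolding in_D_def by blast
  show ?thesis unfolding in_D_def
  proof (intro exI[of _ "\<lambda>j. minor_fun (r j) B"] conjI allI impI)
    fix j assume "j < k"
    then show "matroid_rank (E - A - B) (minor_fun (r j) B)"
      using matroid_rank_minor r(1) B by blast
  next
    fix Z assume "Z \<subseteq> E - A - B"
    then show "minor_fun f B Z = (\<Sum>j<k. minor_fun (r j) B Z)"
      using r(2)[rule_format, of "Z \<union> B"] r(2)[rule_format, of B] B
      unfolding minor_fun_def by (auto simp: sum_subtractf)
  qed
qed

lemma minor_fun_minor_fun: "minor_fun (minor_fun f B) C = minor_fun f (C \<union> B)"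
  unfolding minor_fun_def by (simp add: fun_eq_iff Un_assoc)

lemma in_D_proper_minors:
  assumes delete: "\<And>e. e \<in> E \<Longrightarrow> in_D k (E - {e}) f"
    and contract: "\<And>e. e \<in> E \<Longrightarrow> in_D k (E - {e}) (minor_fun f {e})"
    and AB: "A \<subseteq> E" "B \<subseteq> E" "A \<inter> B = {}" "A \<union> B \<noteq> {}"
  shows "in_D k (E - A - B) (minor_fun f B)"
proof -
  obtain e where e: "e \<in> A \<union> B" using AB(4) by blast
  show ?thesis
  proof (cases "e \<in> A")
    case True
    have "in_D k (E - {e} - (A - {e}) - B) (minor_fun f B)"
      by (rule in_D_minor[OF delete]) (use AB True in auto)
    moreover have "E - {e} - (A - {e}) - B = E - A - B" using True by auto
    ultimately show ?thesis by simp
  next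
    case False
    then have eB: "e \<in> B" using e by auto
    have "in_D k (E - {e} - A - (B - {e})) (minor_fun (minor_fun f {e}) (B - {e}))"
      by (rule in_D_minor[OF contract]) (use AB eB in auto)
    moreover have "E - {e} - A - (B - {e}) = E - A - B" "B - {e} \<union> {e} = B" using eB by auto
    ultimately show ?thesis by (simp add: minor_fun_minor_fun)
  qed
qed

section \<open>Sums of truncated cardinalities\<close>

definition trunc_sum :: "'i set \<Rightarrow> ('i \<Rightarrow> 'a set) \<Rightarrow> ('i \<Rightarrow> int) \<Rightarrow> 'a set \<Rightarrow> int" where
  "trunc_sum P Y s A = (\<Sum>p\<in>P. min (int (card (A \<inter> Y p))) (s p))"

lemma min_card_Int_mono:
  assumes "finite C" "A \<subseteq> C"
  shows "min (int (card (A \<inter> Z))) s \<le> min (int (card (C \<inter> Z))) s"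
proof -
  have "card (A \<inter> Z) \<le> card (C \<inter> Z)" by (rule card_mono) (use assms in auto)
  then show ?thesis by linarith
qed

lemma min_card_Int_submod:
  assumes "finite A" "finite C"
  shows "min (int (card ((A \<union> C) \<inter> Z))) s + min (int (card (A \<inter> C \<inter> Z))) s
         \<le> min (int (card (A \<inter> Z))) s + min (int (card (C \<inter> Z))) s"
proof -
  have "card (A \<inter> Z) + card (C \<inter> Z) = card ((A \<inter> Z) \<union> (C \<inter> Z)) + card ((A \<inter> Z) \<inter> (C \<inter> Z))"
    by (rule card_Un_Int) (use assms in auto)
  moreover have "(A \<inter> Z) \<union> (C \<inter> Z) = (A \<union> C) \<inter> Z" "(A \<inter> Z) \<inter> (C \<inter> Z) = A \<inter> C \<inter> Z" by auto
  ultimately have "int (card ((A \<union> C) \<inter> Z)) + int (card (A \<inter> C \<inter> Z)) = int (card (A \<inter> Z)) + int (card (C \<inter> Z))"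
    by simp
  moreover have "card (A \<inter> C \<inter> Z) \<le> card (A \<inter> Z)" "card (A \<inter> C \<inter> Z) \<le> card (C \<inter> Z)"
    "card (A \<inter> Z) \<le> card ((A \<union> C) \<inter> Z)" "card (C \<inter> Z) \<le> card ((A \<union> C) \<inter> Z)"
    by (auto intro!: card_mono simp: assms)
  ultimately show ?thesis by linarith
qed

lemma polymatroid_trunc_sum:
  assumes "finite E" "\<forall>p\<in>P. 0 \<le> s p"
  shows "polymatroid E (trunc_sum P Y s)"
  unfolding polymatroid_def
proof (intro conjI allI impI)
  show "trunc_sum P Y s {} = 0" unfolding trunc_sum_def using assms(2) by (auto intro: sum.neutral)
next
  fix A C assume "A \<subseteq> C \<and> C \<subseteq> E"
  then show "trunc_sum P Y s A \<le> trunc_sum P Y s C"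
    unfolding trunc_sum_def using assms(1) finite_subset by (intro sum_mono min_card_Int_mono) auto
next
  fix A C assume "A \<subseteq> E \<and> C \<subseteq> E"
  then have "finite A" "finite C" using assms(1) finite_subset by auto
  then show "trunc_sum P Y s (A \<union> C) + trunc_sum P Y s (A \<inter> C) \<le> trunc_sum P Y s A + trunc_sum P Y s C"
    unfolding trunc_sum_def sum.distrib[symmetric] by (intro sum_mono min_card_Int_submod)
qed (use assms in simp)

lemma matroid_rank_trunc_sum:
  assumes "finite E" "finite P" "\<forall>p\<in>P. 0 \<le> s p"
    and disj: "\<forall>p\<in>P. \<forall>q\<in>P. p \<noteq> q \<longrightarrow> Y p \<inter> Y q = {}"
  shows "matroid_rank E (trunc_sum P Y s)"
  unfolding matroid_rank_def
proof (intro conjI allI impI)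
  show "polymatroid E (trunc_sum P Y s)" using polymatroid_trunc_sum assms by blast
  fix A assume "A \<subseteq> E"
  then have fA: "finite A" using assms(1) finite_subset by blast
  have "trunc_sum P Y s A \<le> (\<Sum>p\<in>P. int (card (A \<inter> Y p)))"
    unfolding trunc_sum_def by (intro sum_mono) auto
  also have "\<dots> = int (\<Sum>p\<in>P. card (A \<inter> Y p))" by simp
  also have "(\<Sum>p\<in>P. card (A \<inter> Y p)) = card (\<Union>p\<in>P. A \<inter> Y p)"
    by (rule card_UN_disjoint[symmetric]) (use assms(2) fA disj in auto)
  also have "card (\<Union>p\<in>P. A \<inter> Y p) \<le> card A" by (rule card_mono[OF fA]) auto
  finally show "trunc_sum P Y s A \<le> int (card A)" by simp
qed

text \<open>Each colour class of the blocks is a partition matroid.\<close>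
lemma in_D_trunc_sum_colouring:
  assumes "finite E" "finite P" "\<forall>p\<in>P. 0 \<le> s p" and f: "\<forall>p\<in>P. f p < k"
    and proper: "\<forall>p\<in>P. \<forall>q\<in>P. p \<noteq> q \<and> Y p \<inter> Y q \<noteq> {} \<longrightarrow> f p \<noteq> f q"
  shows "in_D k E (trunc_sum P Y s)"
  unfolding in_D_def
proof (intro exI[of _ "\<lambda>c. trunc_sum {p \<in> P. f p = c} Y s"] conjI allI impI)
  fix c assume "c < k"
  show "matroid_rank E (trunc_sum {p \<in> P. f p = c} Y s)"
  proof (rule matroid_rank_trunc_sum)
    show "\<forall>p\<in>{p \<in> P. f p = c}. \<forall>q\<in>{p \<in> P. f p = c}. p \<noteq> q \<longrightarrow> Y p \<inter> Y q = {}"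
      using proper by blast
  qed (use assms(1-3) in auto)
next
  fix A
  have "(\<Sum>c<k. trunc_sum {p \<in> P. f p = c} Y s A) = trunc_sum P Y s A"
    unfolding trunc_sum_def by (rule sum.group) (use assms(2) f in auto)
  then show "trunc_sum P Y s A = (\<Sum>c<k. trunc_sum {p \<in> P. f p = c} Y s A)" by (rule sym)
qed

lemma trunc_sum_diff:
  "trunc_sum P Y s A - trunc_sum P Y s B
   = (\<Sum>p\<in>P. min (int (card (A \<inter> Y p))) (s p) - min (int (card (B \<inter> Y p))) (s p))"
  unfolding trunc_sum_def by (simp add: sum_subtractf)

section \<open>Colourings of critical graphs\<close>

lemma colourable_card:
  assumes "finite V" "\<forall>v\<in>V. \<not> adj v v"
  shows "colourable V adj (card V)"
proof -
  obtain h where "bij_betw h V {0..<card V}" using ex_bij_betw_finite_nat[OF assms(1)] by blast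
  then show ?thesis
    unfolding colourable_def bij_betw_def inj_on_def using assms(2) by (intro exI[of _ h]) auto
qed

lemma chromatic_number_le: "colourable V adj m \<Longrightarrow> chromatic_number V adj \<le> m"
  unfolding chromatic_number_def by (rule Least_le)

lemma colourable_chromatic_number:
  "colourable V adj m \<Longrightarrow> colourable V adj (chromatic_number V adj)"
  unfolding chromatic_number_def by (rule LeastI)

lemma critical_not_colourable: "critical (k + 1) V adj \<Longrightarrow> \<not> colourable V adj k"
  unfolding critical_def using chromatic_number_le by fastforce

lemma critical_delete_edge_colourable:
  assumes crit: "critical (k + 1) V adj" and "finite V" "\<forall>v\<in>V. \<not> adj v v"
    and "u \<in> V" "v \<in> V" "adj u v"
  shows "colourable V (delete_edge adj u v) k"
proof -
  have "colourable V (delete_edge adj u v) (card V)"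
    by (rule colourable_card) (use assms(2,3) in \<open>auto simp: delete_edge_def\<close>)
  then show ?thesis
    using colourable_chromatic_number crit assms(4-6) unfolding critical_def by fastforce
qed

text \<open>A vertex of degree less than \<open>k\<close> could be recoloured in a \<open>k\<close>-colouring of the graph with one
  of its edges deleted.\<close>
lemma critical_degree_ge:
  assumes crit: "critical (k + 1) V adj" and fin: "finite V" and irrefl: "\<forall>v\<in>V. \<not> adj v v"
    and sym: "\<forall>x\<in>V. \<forall>y\<in>V. adj x y \<longrightarrow> adj y x"
    and uv: "u \<in> V" "v \<in> V" "adj u v"
  shows "k \<le> card {w \<in> V. adj u w}"
proof (rule ccontr)
  let ?N = "{w \<in> V. adj u w}"
  assume few: "\<not> ?thesis"
  obtain f where f: "\<forall>x\<in>V. f x < k" "\<forall>x\<in>V. \<forall>y\<in>V. delete_edge adj u v x y \<longrightarrow> f x \<noteq> f y"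
    using critical_delete_edge_colourable[OF crit fin irrefl uv] unfolding colourable_def by blast
  have "card (f ` ?N) < card {..<k}" using card_image_le[of ?N f] fin few by simp
  then have "\<not> {..<k} \<subseteq> f ` ?N" using card_mono[of "f ` ?N" "{..<k}"] fin by auto
  then obtain c where c: "c < k" "c \<notin> f ` ?N" by blast
  have "colourable V adj k"
    unfolding colourable_def
  proof (intro exI[of _ "f(u := c)"] conjI ballI impI)
    fix x y assume xy: "x \<in> V" "y \<in> V" "adj x y"
    have recoloured: "(f(u := c)) u \<noteq> (f(u := c)) w" if "w \<in> V" "adj u w" for w
      using that irrefl c(2) by auto
    show "(f(u := c)) x \<noteq> (f(u := c)) y"
    proof (cases "x = u \<or> y = u")
      case True
      then show ?thesis using recoloured xy sym by metis
    next
      case False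
      then have "delete_edge adj u v x y" using xy unfolding delete_edge_def by auto
      then show ?thesis using f(2) xy False by auto
    qed
  qed (use f(1) c(1) in auto)
  then show False using critical_not_colourable[OF crit] by blast
qed

section \<open>Dual nullity\<close>

text \<open>For a matroid rank function \<open>r\<close> on \<open>E\<close> this is \<open>|A| - r\<^sup>*(A)\<close>, where \<open>r\<^sup>*\<close> is the rank function of
  the dual matroid; as a function of \<open>A\<close> it is supermodular.\<close>
definition dual_nullity :: "'a set \<Rightarrow> ('a set \<Rightarrow> int) \<Rightarrow> 'a set \<Rightarrow> int" where
  "dual_nullity E r A = r E - r (E - A)"

lemma dual_nullity_empty [simp]: "dual_nullity E r {} = 0"
  unfolding dual_nullity_def by simp

lemma dual_nullity_mono:
  "matroid_rank E r \<Longrightarrow> A \<subseteq> B \<Longrightarrow> dual_nullity E r A \<le> dual_nullity E r B"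
  unfolding dual_nullity_def using matroid_rank_mono[of E r "E - B" "E - A"] by auto

lemma dual_nullity_nonneg: "matroid_rank E r \<Longrightarrow> 0 \<le> dual_nullity E r A"
  using dual_nullity_mono[of E r "{}" A] by simp

lemma dual_nullity_supermod:
  assumes "matroid_rank E r"
  shows "dual_nullity E r A + dual_nullity E r B \<le> dual_nullity E r (A \<union> B) + dual_nullity E r (A \<inter> B)"
proof -
  have "r ((E - A) \<union> (E - B)) + r ((E - A) \<inter> (E - B)) \<le> r (E - A) + r (E - B)"
    by (rule matroid_rank_submod[OF assms]) auto
  moreover have "(E - A) \<union> (E - B) = E - (A \<inter> B)" "(E - A) \<inter> (E - B) = E - (A \<union> B)" by auto
  ultimately show ?thesis unfolding dual_nullity_def by simp
qed

lemma dual_nullity_insert_le: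
  assumes r: "matroid_rank E r"
  shows "dual_nullity E r (insert x A) \<le> dual_nullity E r A + 1"
proof (cases "x \<in> E")
  case True
  have "r (insert x (E - insert x A)) \<le> r (E - insert x A) + 1"
    by (rule matroid_rank_insert_le[OF r]) (use True in auto)
  moreover have "r (E - A) \<le> r (insert x (E - insert x A))"
    by (rule matroid_rank_mono[OF r]) (use True in auto)
  ultimately show ?thesis unfolding dual_nullity_def by simp
next
  case False
  then have "E - insert x A = E - A" by auto
  then show ?thesis unfolding dual_nullity_def by simp
qed

lemma dual_nullity_UN_disjoint_ge:
  assumes r: "matroid_rank E r" and "finite M"
    and disj: "\<forall>m\<in>M. \<forall>m'\<in>M. m \<noteq> m' \<longrightarrow> F m \<inter> F m' = {}"
  shows "(\<Sum>m\<in>M. dual_nullity E r (F m)) \<le> dual_nullity E r (\<Union>m\<in>M. F m)"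
  using \<open>finite M\<close> disj
proof (induction M rule: finite_induct)
  case (insert m M)
  have "F m \<inter> (\<Union>m\<in>M. F m) = {}" using insert.prems insert.hyps(2) by fastforce
  then have "dual_nullity E r (F m) + dual_nullity E r (\<Union>m\<in>M. F m)
      \<le> dual_nullity E r (\<Union>m\<in>insert m M. F m)"
    using dual_nullity_supermod[OF r, of "F m" "\<Union>m\<in>M. F m"] by simp
  then show ?case using insert by simp
qed simp

lemma dual_nullity_pair_trans:
  assumes r: "matroid_rank E r" and "u \<noteq> w" and v: "dual_nullity E r {v} = 0"
    and "1 \<le> dual_nullity E r {u, v}" "1 \<le> dual_nullity E r {v, w}"
  shows "1 \<le> dual_nullity E r {u, w}"
proof -
  have pair_sets: "{u, v} \<union> {v, w} = insert v {u, w}" "{u, v} \<inter> {v, w} = {v}"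
    using \<open>u \<noteq> w\<close> by auto
  have "dual_nullity E r {u, v} + dual_nullity E r {v, w}
      \<le> dual_nullity E r (insert v {u, w}) + dual_nullity E r {v}"
    using dual_nullity_supermod[OF r, of "{u, v}" "{v, w}"] unfolding pair_sets .
  moreover have "dual_nullity E r (insert v {u, w}) \<le> dual_nullity E r {u, w} + 1"
    by (rule dual_nullity_insert_le[OF r])
  ultimately show ?thesis using assms(4,5) v by simp
qed

section \<open>The truncated rank function of a linear hypergraph\<close>

locale truncated_hypergraph =
  fixes E :: "'a set" and n :: nat and X :: "nat \<Rightarrow> 'a set" and t :: "nat \<Rightarrow> int"
  assumes hypergraph: "hypergraph E n X"
    and t_pos: "\<forall>i\<in>{1..n}. 1 \<le> t i"
    and degree_ge_2: "\<forall>e\<in>E. 2 \<le> hdeg n X e"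
    and linear: "\<forall>i\<in>{1..n}. \<forall>j\<in>{1..n}. i \<noteq> j \<longrightarrow> card (X i \<inter> X j) \<le> 1"
begin

abbreviation \<rho> :: "'a set \<Rightarrow> int" where "\<rho> \<equiv> truncated_rho n X t"

lemma finite_E: "finite E"
  using hypergraph unfolding hypergraph_def by blast

lemma edge_subset: "i \<in> {1..n} \<Longrightarrow> X i \<subseteq> E"
  using hypergraph unfolding hypergraph_def by blast

lemma finite_edge: "i \<in> {1..n} \<Longrightarrow> finite (X i)"
  using edge_subset finite_E finite_subset by blast

lemma card_edge_pos: "i \<in> {1..n} \<Longrightarrow> 0 < card (X i)"
  using hypergraph finite_edge unfolding hypergraph_def by (simp add: card_gt_0_iff)

lemma rho_eq_trunc_sum: "\<rho> = trunc_sum {1..n} X t"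
  by (simp add: truncated_rho_def trunc_sum_def fun_eq_iff)

lemma polymatroid_rho: "polymatroid E \<rho>"
  unfolding rho_eq_trunc_sum using finite_E t_pos by (intro polymatroid_trunc_sum) force+

lemma element_in_two_edges:
  assumes "e \<in> E"
  obtains i l where "i \<in> {1..n}" "l \<in> {1..n}" "i \<noteq> l" "e \<in> X i" "e \<in> X l"
proof -
  have "\<not> card {i \<in> {1..n}. e \<in> X i} \<le> Suc 0"
    using degree_ge_2 assms unfolding hdeg_def by fastforce
  then obtain i l where "i \<in> {i \<in> {1..n}. e \<in> X i}" "l \<in> {i \<in> {1..n}. e \<in> X i}" "i \<noteq> l"
    using card_le_Suc0_iff_eq[of "{i \<in> {1..n}. e \<in> X i}"] by auto
  then show ?thesis using that by blast
qed

lemma edges_Int_singleton: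
  assumes "i \<in> {1..n}" "l \<in> {1..n}" "i \<noteq> l" "e \<in> X i" "e \<in> X l"
  shows "X i \<inter> X l = {e}"
proof -
  have "card (X i \<inter> X l) \<le> Suc 0" using linear assms by auto
  then show ?thesis using card_le_Suc0_iff_eq[of "X i \<inter> X l"] finite_edge assms by blast
qed

lemma edge_eq_through_pair:
  assumes "m \<in> {1..n}" "m' \<in> {1..n}" "u \<noteq> v" "u \<in> X m" "v \<in> X m" "u \<in> X m'" "v \<in> X m'"
  shows "m = m'"
proof (rule ccontr)
  assume "m \<noteq> m'"
  then have "X m \<inter> X m' = {u}" using edges_Int_singleton assms by blast
  then show False using assms by auto
qed

text \<open>Colouring the line graph with the edge between two hyperedges through \<open>e\<close> deleted separates
  every other pair of intersecting hyperedges.\<close>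
lemma colouring_off_element:
  assumes crit: "critical (k + 1) {1..n} (line_graph_adj X)" and e: "e \<in> E"
  obtains f where "\<forall>p\<in>{1..n}. f p < k"
    "\<forall>p\<in>{1..n}. \<forall>q\<in>{1..n}. p \<noteq> q \<and> (X p - {e}) \<inter> (X q - {e}) \<noteq> {} \<longrightarrow> f p \<noteq> f q"
proof -
  obtain i l where il: "i \<in> {1..n}" "l \<in> {1..n}" "i \<noteq> l" "e \<in> X i" "e \<in> X l"
    using element_in_two_edges[OF e] by blast
  obtain f where f: "\<forall>v\<in>{1..n}. f v < k"
    "\<forall>p\<in>{1..n}. \<forall>q\<in>{1..n}. delete_edge (line_graph_adj X) i l p q \<longrightarrow> f p \<noteq> f q"
    using critical_delete_edge_colourable[OF crit, of i l] il
    unfolding colourable_def line_graph_adj_def by auto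
  have "delete_edge (line_graph_adj X) i l p q"
    if "p \<noteq> q" "(X p - {e}) \<inter> (X q - {e}) \<noteq> {}" for p q
  proof -
    have "{p, q} \<noteq> {i, l}"
      using that edges_Int_singleton[OF il] by (auto simp: doubleton_eq_iff)
    then show ?thesis using that unfolding delete_edge_def line_graph_adj_def by auto
  qed
  then show ?thesis using that f by blast
qed

lemma t_nonneg: "\<forall>p\<in>{1..n}. 0 \<le> t p"
  using t_pos by force

lemma in_D_delete:
  assumes crit: "critical (k + 1) {1..n} (line_graph_adj X)" and e: "e \<in> E"
  shows "in_D k (E - {e}) \<rho>"
proof -
  obtain f where f: "\<forall>p\<in>{1..n}. f p < k"
    "\<forall>p\<in>{1..n}. \<forall>q\<in>{1..n}. p \<noteq> q \<and> (X p - {e}) \<inter> (X q - {e}) \<noteq> {} \<longrightarrow> f p \<noteq> f q"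
    using colouring_off_element[OF crit e] by blast
  have "in_D k (E - {e}) (trunc_sum {1..n} (\<lambda>p. X p - {e}) t)"
    using in_D_trunc_sum_colouring[where Y = "\<lambda>p. X p - {e}", OF _ _ t_nonneg f] finite_E by simp
  then show ?thesis
  proof (rule in_D_cong, intro allI impI)
    fix A assume "A \<subseteq> E - {e}"
    then have "A \<inter> (X p - {e}) = A \<inter> X p" for p by auto
    then show "\<rho> A = trunc_sum {1..n} (\<lambda>p. X p - {e}) t A"
      unfolding rho_eq_trunc_sum trunc_sum_def by simp
  qed
qed

text \<open>Contracting \<open>e\<close> lowers the truncation of every hyperedge through \<open>e\<close> by one.\<close>
lemma in_D_contract:
  assumes crit: "critical (k + 1) {1..n} (line_graph_adj X)" and e: "e \<in> E"
  shows "in_D k (E - {e}) (minor_fun \<rho> {e})"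
proof -
  define s where "s p = t p - (if e \<in> X p then 1 else 0)" for p
  have s_nonneg: "\<forall>p\<in>{1..n}. 0 \<le> s p" using t_pos by (force simp: s_def)
  obtain f where f: "\<forall>p\<in>{1..n}. f p < k"
    "\<forall>p\<in>{1..n}. \<forall>q\<in>{1..n}. p \<noteq> q \<and> (X p - {e}) \<inter> (X q - {e}) \<noteq> {} \<longrightarrow> f p \<noteq> f q"
    using colouring_off_element[OF crit e] by blast
  have "in_D k (E - {e}) (trunc_sum {1..n} (\<lambda>p. X p - {e}) s)"
    using in_D_trunc_sum_colouring[where Y = "\<lambda>p. X p - {e}", OF _ _ s_nonneg f] finite_E by simp
  then show ?thesis
  proof (rule in_D_cong, intro allI impI)
    fix A assume A: "A \<subseteq> E - {e}"
    show "minor_fun \<rho> {e} A = trunc_sum {1..n} (\<lambda>p. X p - {e}) s A"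
      unfolding minor_fun_def rho_eq_trunc_sum trunc_sum_diff unfolding trunc_sum_def
    proof (rule sum.cong)
      fix p assume p: "p \<in> {1..n}"
      have tp: "1 \<le> t p" using t_pos p by blast
      show "min (int (card ((A \<union> {e}) \<inter> X p))) (t p) - min (int (card ({e} \<inter> X p))) (t p)
          = min (int (card (A \<inter> (X p - {e})))) (s p)"
      proof (cases "e \<in> X p")
        case True
        have "finite (A \<inter> (X p - {e}))" using finite_edge[OF p] by auto
        moreover have "(A \<union> {e}) \<inter> X p = insert e (A \<inter> (X p - {e}))" "{e} \<inter> X p = {e}"
          using True by auto
        ultimately show ?thesis using True tp by (simp add: s_def)
      next
        case False
        then have "(A \<union> {e}) \<inter> X p = A \<inter> (X p - {e})" "{e} \<inter> X p = {}" by auto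
        then show ?thesis using False tp by (simp add: s_def)
      qed
    qed simp
  qed
qed

lemma proper_minors_in_D:
  assumes "critical (k + 1) {1..n} (line_graph_adj X)"
    and "A \<subseteq> E" "B \<subseteq> E" "A \<inter> B = {}" "A \<union> B \<noteq> {}"
  shows "in_D k (E - A - B) (minor_fun \<rho> B)"
  using in_D_proper_minors in_D_delete in_D_contract assms by metis

lemma rho_singleton:
  assumes "e \<in> E"
  shows "\<rho> {e} = int (hdeg n X e)"
proof -
  have "\<rho> {e} = (\<Sum>m\<in>{1..n}. if e \<in> X m then 1 else 0)"
    unfolding truncated_rho_def
  proof (rule sum.cong)
    fix m assume "m \<in> {1..n}"
    then have "1 \<le> t m" using t_pos by blast
    then show "min (int (card ({e} \<inter> X m))) (t m) = (if e \<in> X m then 1 else 0)" by auto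
  qed simp
  also have "\<dots> = int (hdeg n X e)"
    unfolding hdeg_def by (simp add: sum.If_cases Int_def)
  finally show ?thesis .
qed

text \<open>A hyperedge \<open>{e}\<close> is a vertex of degree \<open>w(e) - 1\<close> in the line graph, whereas
  \<open>w(e) = \<rho>({e}) \<le> k\<close> for \<open>\<rho> \<in> D\<^sub>k\<close>; but vertices of \<open>(k+1)\<close>-critical graphs have degree at least \<open>k\<close>.\<close>
lemma singleton_edge_not_in_D:
  assumes crit: "critical (k + 1) {1..n} (line_graph_adj X)" and "in_D k E \<rho>"
    and i: "i \<in> {1..n}" "card (X i) = 1"
  shows False
proof -
  obtain e where Xi: "X i = {e}" using i(2) card_1_singletonE by blast
  have e: "e \<in> E" using edge_subset[OF i(1)] Xi by auto
  obtain r where r: "\<forall>j<k. matroid_rank E (r j)" "\<forall>Z. Z \<subseteq> E \<longrightarrow> \<rho> Z = (\<Sum>j<k. r j Z)"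
    using \<open>in_D k E \<rho>\<close> unfolding in_D_def by blast
  have "\<rho> {e} = (\<Sum>j<k. r j {e})" using r(2) e by simp
  also have "\<dots> \<le> (\<Sum>j<k. 1)"
    by (rule sum_mono) (use r(1) e matroid_rank_le_card[of E _ "{e}"] in force)
  finally have deg: "hdeg n X e \<le> k" using rho_singleton[OF e] by simp
  obtain a b where ab: "a \<in> {1..n}" "b \<in> {1..n}" "a \<noteq> b" "e \<in> X a" "e \<in> X b"
    by (rule element_in_two_edges[OF e])
  define l where "l = (if a = i then b else a)"
  have l: "l \<in> {1..n}" "l \<noteq> i" "e \<in> X l" using ab unfolding l_def by auto
  let ?N = "{m \<in> {1..n}. e \<in> X m}"
  have "card {m \<in> {1..n}. line_graph_adj X i m} \<le> card (?N - {i})"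
    by (rule card_mono) (use Xi in \<open>auto simp: line_graph_adj_def\<close>)
  moreover have "card (?N - {i}) < card ?N" using i Xi by (intro card_Diff1_less) auto
  ultimately have "card {m \<in> {1..n}. line_graph_adj X i m} < hdeg n X e"
    unfolding hdeg_def by linarith
  moreover have "k \<le> card {m \<in> {1..n}. line_graph_adj X i m}"
  proof (rule critical_degree_ge[OF crit])
    show "\<forall>x\<in>{1..n}. \<forall>y\<in>{1..n}. line_graph_adj X x y \<longrightarrow> line_graph_adj X y x"
      unfolding line_graph_adj_def by blast
    show "line_graph_adj X i l" unfolding line_graph_adj_def using l Xi by blast
  qed (use i l in \<open>auto simp: line_graph_adj_def\<close>)
  ultimately show False using deg by simp
qed

end

section \<open>Decompositions of the truncated rank function into matroids\<close>

locale rho_decomposition = truncated_hypergraph +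
  fixes k :: nat and r :: "nat \<Rightarrow> 'a set \<Rightarrow> int"
  assumes t_less_card: "\<forall>i\<in>{1..n}. t i < int (card (X i))"
    and matroid_r: "\<forall>j<k. matroid_rank E (r j)"
    and rho_sum: "\<forall>Z. Z \<subseteq> E \<longrightarrow> truncated_rho n X t Z = (\<Sum>j<k. r j Z)"
    and no_pair_triangle: "\<not> (\<exists>a\<in>E. \<exists>b\<in>E. \<exists>c\<in>E. a \<noteq> b \<and> a \<noteq> c \<and> b \<noteq> c
                 \<and> (\<exists>i\<in>{1..n}. X i = {a, b}) \<and> (\<exists>i\<in>{1..n}. X i = {a, c})
                 \<and> (\<exists>i\<in>{1..n}. X i = {b, c}))"
begin

abbreviation \<kappa> :: "nat \<Rightarrow> 'a set \<Rightarrow> int" where "\<kappa> j \<equiv> dual_nullity E (r j)"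

lemma matroid_rank_r: "j < k \<Longrightarrow> matroid_rank E (r j)"
  using matroid_r by blast

lemma t_le_card_diff_edge:
  assumes i: "i \<in> {1..n}" and p: "p \<in> {1..n}" "p \<noteq> i"
  shows "t p \<le> int (card (X p - X i))"
proof -
  have "card (X p) \<le> card (X p - X i) + card (X p \<inter> X i)"
    using card_Un_le[of "X p - X i" "X p \<inter> X i"] by (simp add: Un_Diff_Int)
  moreover have "card (X p \<inter> X i) \<le> 1" using linear i p by auto
  ultimately show ?thesis using t_less_card p by force
qed

text \<open>Outside \<open>X\<^sub>i\<close> every other hyperedge is already saturated, so contracting \<open>E - X\<^sub>i\<close> leaves
  the uniform matroid \<open>U(t\<^sub>i, |X\<^sub>i|)\<close> on \<open>X\<^sub>i\<close>.\<close>
lemma rho_contract_off_edge: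
  assumes i: "i \<in> {1..n}" and S: "S \<subseteq> X i"
  shows "minor_fun \<rho> (E - X i) S = min (int (card S)) (t i)"
proof -
  have "min (int (card ((S \<union> (E - X i)) \<inter> X p))) (t p) - min (int (card ((E - X i) \<inter> X p))) (t p)
      = (if p = i then min (int (card S)) (t i) else 0)" if p: "p \<in> {1..n}" for p
  proof (cases "p = i")
    case True
    then have "(S \<union> (E - X i)) \<inter> X p = S" "(E - X i) \<inter> X p = {}" using S by auto
    then show ?thesis using True t_nonneg i by simp
  next
    case False
    have diff: "(E - X i) \<inter> X p = X p - X i" using edge_subset[OF p] by auto
    have "card (X p - X i) \<le> card ((S \<union> (E - X i)) \<inter> X p)"
      by (rule card_mono) (use finite_edge[OF p] diff in auto)
    then show ?thesis using False diff t_le_card_diff_edge[OF i p False] by simp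
  qed
  then have "(\<Sum>p\<in>{1..n}. min (int (card ((S \<union> (E - X i)) \<inter> X p))) (t p)
      - min (int (card ((E - X i) \<inter> X p))) (t p)) = min (int (card S)) (t i)"
    using i by (simp add: sum.delta)
  then show ?thesis unfolding minor_fun_def rho_eq_trunc_sum trunc_sum_diff .
qed

lemma unique_colour:
  assumes i: "i \<in> {1..n}"
  shows "\<exists>!j. j < k \<and> \<kappa> j (X i) \<noteq> 0"
proof -
  let ?B = "E - X i"
  have ground: "E - {} - ?B = X i" using edge_subset[OF i] by auto
  have "\<exists>!j. j < k \<and> minor_fun (r j) ?B (X i) \<noteq> 0"
  proof (rule uniform_rank_sum_unique_nonzero[where r = "\<lambda>j. minor_fun (r j) ?B" and Y = "X i"])
    show "\<forall>j<k. matroid_rank (X i) (minor_fun (r j) ?B)"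
      using matroid_rank_minor[OF matroid_rank_r, of _ ?B "{}"] ground by auto
    show "\<forall>S. S \<subseteq> X i \<longrightarrow> (\<Sum>j<k. minor_fun (r j) ?B S) = min (int (card S)) (t i)"
    proof (intro allI impI)
      fix S assume S: "S \<subseteq> X i"
      then have "(\<Sum>j<k. minor_fun (r j) ?B S) = minor_fun \<rho> ?B S"
        using rho_sum[rule_format, of "S \<union> ?B"] rho_sum[rule_format, of ?B] edge_subset[OF i]
        unfolding minor_fun_def by (auto simp: sum_subtractf)
      then show "(\<Sum>j<k. minor_fun (r j) ?B S) = min (int (card S)) (t i)"
        using rho_contract_off_edge[OF i S] by simp
    qed
  qed (use t_pos t_less_card i in auto)
  moreover have "X i \<union> ?B = E" using edge_subset[OF i] by auto
  ultimately show ?thesis unfolding minor_fun_def dual_nullity_def by simp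
qed

definition colour :: "nat \<Rightarrow> nat" where
  "colour i = (THE j. j < k \<and> \<kappa> j (X i) \<noteq> 0)"

lemma colour_less: "i \<in> {1..n} \<Longrightarrow> colour i < k"
  unfolding colour_def using theI'[OF unique_colour] by blast

lemma dual_nullity_edge_other_colour:
  "i \<in> {1..n} \<Longrightarrow> g < k \<Longrightarrow> g \<noteq> colour i \<Longrightarrow> \<kappa> g (X i) = 0"
  unfolding colour_def using the1_equality[OF unique_colour] by blast

text \<open>Hyperedges of slack \<open>1\<close> are called tight.\<close>
definition slack :: "nat \<Rightarrow> int" where
  "slack m = int (card (X m)) - t m"

definition edge_excess :: "nat \<Rightarrow> 'a set \<Rightarrow> int" where
  "edge_excess m A = max 0 (int (card (A \<inter> X m)) - slack m)"

text \<open>By \<open>sum_dual_nullity_eq_excess\<close> below, \<open>excess A = \<rho>(E) - \<rho>(E - A)\<close>.\<close>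
definition excess :: "'a set \<Rightarrow> int" where
  "excess A = (\<Sum>m\<in>{1..n}. edge_excess m A)"

lemma slack_ge_1: "m \<in> {1..n} \<Longrightarrow> 1 \<le> slack m"
  using t_less_card unfolding slack_def by force

lemma edge_excess_nonneg: "0 \<le> edge_excess m A"
  unfolding edge_excess_def by simp

lemma edge_excess_eq_0: "m \<in> {1..n} \<Longrightarrow> card (A \<inter> X m) \<le> 1 \<Longrightarrow> edge_excess m A = 0"
  unfolding edge_excess_def using slack_ge_1 by fastforce

lemma edge_excess_ge_1:
  assumes "m \<in> {1..n}" "slack m = 1" "finite A" "x \<noteq> y" "x \<in> A \<inter> X m" "y \<in> A \<inter> X m"
  shows "1 \<le> edge_excess m A"
proof -
  have "card {x, y} \<le> card (A \<inter> X m)" by (rule card_mono) (use assms in auto)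
  then show ?thesis using assms(2,4) unfolding edge_excess_def by simp
qed

lemma edge_excess_le_1:
  assumes "m \<in> {1..n}" "A \<inter> X m \<subseteq> {a, b}"
  shows "edge_excess m A \<le> 1"
proof -
  have "card (A \<inter> X m) \<le> card {a, b}" by (rule card_mono) (use assms in auto)
  also have "\<dots> \<le> 2" by (simp add: card_insert_le_m1)
  finally show ?thesis unfolding edge_excess_def using slack_ge_1[OF assms(1)] by simp
qed

lemma excess_eq_sum_edges:
  assumes "M \<subseteq> {1..n}"
    and pairs: "\<And>m x y. m \<in> {1..n} \<Longrightarrow> x \<in> A \<inter> X m \<Longrightarrow> y \<in> A \<inter> X m \<Longrightarrow> x \<noteq> y \<Longrightarrow> m \<in> M"
  shows "excess A = (\<Sum>m\<in>M. edge_excess m A)"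
  unfolding excess_def
proof (rule sum.mono_neutral_right)
  show "\<forall>m\<in>{1..n} - M. edge_excess m A = 0"
  proof
    fix m assume m: "m \<in> {1..n} - M"
    have "finite (A \<inter> X m)" using finite_edge m by auto
    then have "card (A \<inter> X m) \<le> Suc 0"
      using pairs[of m] m card_le_Suc0_iff_eq[of "A \<inter> X m"] by blast
    then show "edge_excess m A = 0" using edge_excess_eq_0 m by simp
  qed
qed (use assms(1) in auto)

lemma sum_edge_excess_le_excess: "M \<subseteq> {1..n} \<Longrightarrow> (\<Sum>m\<in>M. edge_excess m A) \<le> excess A"
  unfolding excess_def using edge_excess_nonneg by (intro sum_mono2) auto

lemma sum_dual_nullity_eq_excess: "(\<Sum>g<k. \<kappa> g A) = excess A"
proof -
  have "(\<Sum>g<k. \<kappa> g A) = \<rho> E - \<rho> (E - A)"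
    using rho_sum unfolding dual_nullity_def by (simp add: sum_subtractf)
  also have "\<dots> = excess A"
    unfolding rho_eq_trunc_sum trunc_sum_diff excess_def
  proof (rule sum.cong)
    fix m assume m: "m \<in> {1..n}"
    have "E \<inter> X m = X m" "(E - A) \<inter> X m = X m - A \<inter> X m" using edge_subset[OF m] by auto
    moreover have "card (X m - A \<inter> X m) = card (X m) - card (A \<inter> X m)"
      "card (A \<inter> X m) \<le> card (X m)"
      using finite_edge[OF m] by (auto simp: card_Diff_subset card_mono)
    ultimately show "min (int (card (E \<inter> X m))) (t m) - min (int (card ((E - A) \<inter> X m))) (t m)
        = edge_excess m A"
      using t_less_card m unfolding edge_excess_def slack_def by (auto simp: of_nat_diff)
  qed simp
  finally show ?thesis .
qed

lemma card_Int_other_edge_le_1: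
  assumes "m \<in> {1..n}" "m' \<in> {1..n}" "m' \<noteq> m" "S \<subseteq> X m"
  shows "card (S \<inter> X m') \<le> 1"
proof -
  have "card (S \<inter> X m') \<le> card (X m \<inter> X m')"
    by (rule card_mono) (use finite_edge assms in auto)
  also have "\<dots> \<le> 1" using linear assms by auto
  finally show ?thesis .
qed

lemma excess_subset_edge:
  assumes m: "m \<in> {1..n}" and S: "S \<subseteq> X m"
  shows "excess S = max 0 (int (card S) - slack m)"
proof -
  have "excess S = (\<Sum>m'\<in>{m}. edge_excess m' S)"
  proof (rule excess_eq_sum_edges)
    fix m' x y assume "m' \<in> {1..n}" "x \<in> S \<inter> X m'" "y \<in> S \<inter> X m'" "x \<noteq> y"
    then show "m' \<in> {m}" using edge_eq_through_pair[of m' m x y] S m by auto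
  qed (use m in simp)
  moreover have "S \<inter> X m = S" using S by auto
  ultimately show ?thesis unfolding edge_excess_def by simp
qed

lemma dual_nullity_other_colour:
  assumes m: "m \<in> {1..n}" and g: "g < k" "g \<noteq> colour m" and S: "S \<subseteq> X m"
  shows "\<kappa> g S = 0"
  using dual_nullity_mono[OF matroid_rank_r[OF g(1)] S] dual_nullity_nonneg[OF matroid_rank_r[OF g(1)]]
    dual_nullity_edge_other_colour[OF m g]
  by (simp add: order_antisym)

lemma dual_nullity_colour:
  assumes m: "m \<in> {1..n}" and S: "S \<subseteq> X m"
  shows "\<kappa> (colour m) S = max 0 (int (card S) - slack m)"
proof -
  have "(\<Sum>g<k. \<kappa> g S) = \<kappa> (colour m) S + (\<Sum>g\<in>{..<k} - {colour m}. \<kappa> g S)"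
    by (rule sum.remove) (use colour_less[OF m] in auto)
  moreover have "(\<Sum>g\<in>{..<k} - {colour m}. \<kappa> g S) = 0"
    using dual_nullity_other_colour[OF m _ _ S] by (intro sum.neutral) auto
  ultimately show ?thesis using sum_dual_nullity_eq_excess excess_subset_edge[OF m S] by simp
qed

lemma dual_nullity_singleton:
  assumes g: "g < k"
  shows "\<kappa> g {x} = 0"
proof -
  have "excess {x} = 0"
    using excess_eq_sum_edges[of "{}" "{x}"] by auto
  then have "(\<Sum>g<k. \<kappa> g {x}) = 0" using sum_dual_nullity_eq_excess by simp
  then show ?thesis
    using sum_nonneg_eq_0_iff[of "{..<k}" "\<lambda>g. \<kappa> g {x}"] dual_nullity_nonneg[OF matroid_rank_r] g
    by auto
qed

lemma dual_nullity_le_sum: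
  assumes "M \<subseteq> {..<k}"
  shows "(\<Sum>g\<in>M. \<kappa> g A) \<le> excess A"
  unfolding sum_dual_nullity_eq_excess[symmetric]
  using assms dual_nullity_nonneg[OF matroid_rank_r] by (intro sum_mono2) auto

text \<open>A pair of elements has positive dual nullity only inside a hyperedge of slack \<open>1\<close>, which
  carries all of the excess \<open>1\<close> of the pair and hence has the same colour.\<close>
lemma dual_nullity_pair_tight_edge:
  assumes g: "g < k" and "u \<noteq> v" and pos: "1 \<le> \<kappa> g {u, v}"
  obtains B where "B \<in> {1..n}" "u \<in> X B" "v \<in> X B" "slack B = 1" "colour B = g"
proof -
  have "\<kappa> g {u, v} \<le> excess {u, v}" using dual_nullity_le_sum[of "{g}"] g by simp
  then have excess_pos: "1 \<le> excess {u, v}" using pos by simp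
  have pair: "u \<in> X m \<and> v \<in> X m" if "x \<in> {u, v} \<inter> X m" "y \<in> {u, v} \<inter> X m" "x \<noteq> y" for m x y
    using that by auto
  obtain B where B: "B \<in> {1..n}" "u \<in> X B" "v \<in> X B"
  proof (rule ccontr)
    assume "\<not> thesis"
    then have "excess {u, v} = (\<Sum>m\<in>{}. edge_excess m {u, v})"
      by (intro excess_eq_sum_edges) (use that pair in blast)+
    then show False using excess_pos by simp
  qed
  have "excess {u, v} = (\<Sum>m\<in>{B}. edge_excess m {u, v})"
  proof (rule excess_eq_sum_edges)
    fix m x y assume "m \<in> {1..n}" "x \<in> {u, v} \<inter> X m" "y \<in> {u, v} \<inter> X m" "x \<noteq> y"
    then show "m \<in> {B}" using pair edge_eq_through_pair[OF _ B(1) \<open>u \<noteq> v\<close> _ _ B(2,3)] by blast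
  qed (use B(1) in simp)
  then have "excess {u, v} = edge_excess B {u, v}" by simp
  also have "\<dots> = max 0 (2 - slack B)"
    unfolding edge_excess_def using B \<open>u \<noteq> v\<close> by (simp add: insert_absorb)
  finally have excess_uv: "excess {u, v} = max 0 (2 - slack B)" .
  then have slack: "slack B = 1" using excess_pos slack_ge_1[OF B(1)] by simp
  have "colour B = g"
  proof (rule ccontr)
    assume other: "colour B \<noteq> g"
    have "\<kappa> (colour B) {u, v} = 1"
      using dual_nullity_colour[OF B(1), of "{u, v}"] B slack \<open>u \<noteq> v\<close> by simp
    moreover have "\<kappa> g {u, v} + \<kappa> (colour B) {u, v} \<le> excess {u, v}"
      using dual_nullity_le_sum[of "{g, colour B}"] g colour_less[OF B(1)] other by simp
    ultimately show False using pos excess_uv slack by simp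
  qed
  then show ?thesis using that B slack by blast
qed

lemma edge_other_element:
  assumes "m \<in> {1..n}"
  obtains x where "x \<in> X m" "x \<noteq> p"
proof -
  have "2 \<le> card (X m)" using t_pos t_less_card assms by force
  then have "\<not> X m \<subseteq> {p}" using card_mono[of "{p}" "X m"] by auto
  then show ?thesis using that by blast
qed

lemma triple_positive_other_colour:
  assumes L: "L \<in> {1..n}" "slack L = 1" and u: "u \<notin> X L"
    and ab: "a \<in> X L" "b \<in> X L" "a \<noteq> b"
    and Ba: "Ba \<in> {1..n}" "u \<in> X Ba" "a \<in> X Ba" "slack Ba = 1"
    and Bb: "Bb \<in> {1..n}" "u \<in> X Bb" "b \<in> X Bb" "slack Bb = 1"
  obtains g where "g < k" "g \<noteq> colour L" "1 \<le> \<kappa> g {u, a, b}"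
proof -
  let ?j = "colour L" and ?T = "{u, a, b}"
  have j: "?j < k" using colour_less[OF L(1)] .
  have ua: "u \<noteq> a" "u \<noteq> b" using u ab by auto
  have distinct: "Ba \<noteq> L" "Bb \<noteq> L" "Ba \<noteq> Bb"
    using Ba Bb u edge_eq_through_pair[OF Ba(1) L(1) ab(3) Ba(3) _ ab(1,2)] by auto
  have "edge_excess L ?T + edge_excess Ba ?T + edge_excess Bb ?T = (\<Sum>m\<in>{L, Ba, Bb}. edge_excess m ?T)"
    using distinct by simp
  also have "\<dots> \<le> excess ?T" using L Ba Bb by (intro sum_edge_excess_le_excess) auto
  finally have "3 \<le> excess ?T"
    using edge_excess_ge_1[OF L(1,2), of ?T a b] edge_excess_ge_1[OF Ba(1,4), of ?T u a]
      edge_excess_ge_1[OF Bb(1,4), of ?T u b] ab Ba Bb ua by simp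
  moreover have "\<kappa> ?j ?T \<le> 2"
    using dual_nullity_insert_le[OF matroid_rank_r[OF j], of u "{a, b}"]
      dual_nullity_insert_le[OF matroid_rank_r[OF j], of a "{b}"] dual_nullity_singleton[OF j, of b] by simp
  moreover have "(\<Sum>g<k. \<kappa> g ?T) = \<kappa> ?j ?T + (\<Sum>g\<in>{..<k} - {?j}. \<kappa> g ?T)"
    by (rule sum.remove) (use j in auto)
  ultimately have "0 < (\<Sum>g\<in>{..<k} - {?j}. \<kappa> g ?T)" using sum_dual_nullity_eq_excess by simp
  then obtain g where "g \<in> {..<k} - {?j}" "0 < \<kappa> g ?T" by (meson not_le sum_nonpos)
  then show ?thesis using that by auto
qed

text \<open>By supermodularity the two triples would give \<open>{u, a, b, c}\<close> dual nullity \<open>2\<close> in colour \<open>g\<close>,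
  while \<open>{a, b, c} \<subseteq> X\<^sub>L\<close> and \<open>{u, a} \<subseteq> X\<^bsub>B\<^sub>a\<^esub>\<close> have none.\<close>
lemma triples_positive_colours_differ:
  assumes g: "g < k" "g \<noteq> colour L" and L: "L \<in> {1..n}" and u: "u \<notin> X L"
    and abc: "a \<in> X L" "b \<in> X L" "c \<in> X L" "b \<noteq> c"
    and Ba: "Ba \<in> {1..n}" "u \<in> X Ba" "a \<in> X Ba" "colour Ba = colour L"
    and pos: "1 \<le> \<kappa> g {u, a, b}" "1 \<le> \<kappa> g {u, a, c}"
  shows False
proof -
  have r: "matroid_rank E (r g)" using matroid_rank_r[OF g(1)] .
  have sets: "{u, a, b} \<union> {u, a, c} = insert u {a, b, c}" "{u, a, b} \<inter> {u, a, c} = {u, a}"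
    using abc u by auto
  have "\<kappa> g {u, a, b} + \<kappa> g {u, a, c} \<le> \<kappa> g (insert u {a, b, c}) + \<kappa> g {u, a}"
    using dual_nullity_supermod[OF r, of "{u, a, b}" "{u, a, c}"] unfolding sets .
  moreover have "\<kappa> g (insert u {a, b, c}) \<le> \<kappa> g {a, b, c} + 1" by (rule dual_nullity_insert_le[OF r])
  moreover have "\<kappa> g {a, b, c} = 0" using dual_nullity_other_colour[OF L g] abc by simp
  moreover have "\<kappa> g {u, a} = 0" using dual_nullity_other_colour[OF Ba(1) g(1)] g(2) Ba by simp
  ultimately show False using pos by simp
qed

lemma excess_fan_le_5:
  assumes L: "L \<in> {1..n}" "slack L = 1" and u: "u \<notin> X L"
    and v: "v1 \<in> X L" "v2 \<in> X L" "v3 \<in> X L" "v1 \<noteq> v2" "v1 \<noteq> v3" "v2 \<noteq> v3"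
    and B: "B1 \<in> {1..n}" "u \<in> X B1" "v1 \<in> X B1" "B2 \<in> {1..n}" "u \<in> X B2" "v2 \<in> X B2"
      "B3 \<in> {1..n}" "u \<in> X B3" "v3 \<in> X B3"
  shows "excess {u, v1, v2, v3} \<le> 5"
proof -
  let ?A = "{u, v1, v2, v3}"
  have spoke: "?A \<inter> X Bi \<subseteq> {u, w}" if "Bi \<in> {1..n}" "u \<in> X Bi" "w \<in> X L" "w \<in> X Bi" for Bi w
  proof
    fix x assume x: "x \<in> ?A \<inter> X Bi"
    show "x \<in> {u, w}"
    proof (rule ccontr)
      assume "x \<notin> {u, w}"
      then have "x \<in> X L" "w \<noteq> x" using x v by auto
      then have "Bi = L" using edge_eq_through_pair[OF that(1) L(1), of w x] that x by blast
      then show False using that(2) u by simp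
    qed
  qed
  have "excess ?A = (\<Sum>m\<in>{L, B1, B2, B3}. edge_excess m ?A)"
  proof (rule excess_eq_sum_edges)
    fix m x y assume m: "m \<in> {1..n}" and xy: "x \<in> ?A \<inter> X m" "y \<in> ?A \<inter> X m" "x \<noteq> y"
    have through: "m = B" if "B \<in> {1..n}" "x \<in> X B" "y \<in> X B" for B
      using edge_eq_through_pair[of m B x y] m xy that by blast
    have "(x \<in> X L \<and> y \<in> X L) \<or> {x, y} = {u, v1} \<or> {x, y} = {u, v2} \<or> {x, y} = {u, v3}"
      using xy v by auto
    then show "m \<in> {L, B1, B2, B3}"
    proof (elim disjE)
      assume "x \<in> X L \<and> y \<in> X L"
      then show ?thesis using through L(1) by blast
    qed (use through B in \<open>auto simp: doubleton_eq_iff\<close>)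
  qed (use L B in auto)
  also have "\<dots> \<le> edge_excess L ?A + (\<Sum>m\<in>{B1, B2, B3}. edge_excess m ?A)"
    by (simp add: sum.insert_if edge_excess_nonneg)
  also have "(\<Sum>m\<in>{B1, B2, B3}. edge_excess m ?A) \<le> of_nat (card {B1, B2, B3}) * 1"
    using edge_excess_le_1[OF _ spoke] B v by (intro sum_bounded_above) auto
  also have "of_nat (card {B1, B2, B3}) * 1 \<le> (3::int)" by (simp add: card_insert_le_m1)
  finally have "excess ?A \<le> edge_excess L ?A + 3" by simp
  moreover have "?A \<inter> X L = {v1, v2, v3}" using u v by auto
  ultimately show ?thesis unfolding edge_excess_def using v L(2) by simp
qed

lemma dual_nullity_fan_ge_3:
  assumes L: "L \<in> {1..n}" "slack L = 1" and u: "u \<notin> X L"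
    and v: "v1 \<in> X L" "v2 \<in> X L" "v3 \<in> X L" "v1 \<noteq> v2" "v1 \<noteq> v3" "v2 \<noteq> v3"
    and B1: "B1 \<in> {1..n}" "u \<in> X B1" "v1 \<in> X B1" "slack B1 = 1" "colour B1 = colour L"
  shows "3 \<le> \<kappa> (colour L) {u, v1, v2, v3}"
proof -
  let ?j = "colour L"
  have j: "?j < k" using colour_less[OF L(1)] .
  have "\<kappa> ?j {v1, v2, v3} = 2" using dual_nullity_colour[OF L(1), of "{v1, v2, v3}"] v L(2) by simp
  moreover have "u \<noteq> v1" using u v(1) by auto
  then have "\<kappa> ?j {u, v1} = 1"
    using dual_nullity_colour[OF B1(1), of "{u, v1}"] B1 by simp
  moreover have sets: "{v1, v2, v3} \<union> {u, v1} = {u, v1, v2, v3}" "{v1, v2, v3} \<inter> {u, v1} = {v1}"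
    using u v by auto
  have "\<kappa> ?j {v1, v2, v3} + \<kappa> ?j {u, v1} \<le> \<kappa> ?j {u, v1, v2, v3} + \<kappa> ?j {v1}"
    using dual_nullity_supermod[OF matroid_rank_r[OF j], of "{v1, v2, v3}" "{u, v1}"] unfolding sets .
  ultimately show ?thesis using dual_nullity_singleton[OF j] by simp
qed

text \<open>Three tight hyperedges of the colour of \<open>L\<close> through \<open>u\<close> and three points of \<open>L\<close> would force
  dual nullity at least \<open>3 + 1 + 1 + 1\<close> on \<open>{u, v\<^sub>1, v\<^sub>2, v\<^sub>3}\<close>, whose excess is at most \<open>5\<close>.\<close>
lemma no_tight_fan:
  assumes L: "L \<in> {1..n}" "slack L = 1" and u: "u \<notin> X L"
    and v: "v1 \<in> X L" "v2 \<in> X L" "v3 \<in> X L" "v1 \<noteq> v2" "v1 \<noteq> v3" "v2 \<noteq> v3"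
    and B1: "B1 \<in> {1..n}" "u \<in> X B1" "v1 \<in> X B1" "slack B1 = 1" "colour B1 = colour L"
    and B2: "B2 \<in> {1..n}" "u \<in> X B2" "v2 \<in> X B2" "slack B2 = 1" "colour B2 = colour L"
    and B3: "B3 \<in> {1..n}" "u \<in> X B3" "v3 \<in> X B3" "slack B3 = 1" "colour B3 = colour L"
  shows False
proof -
  let ?j = "colour L" and ?A = "{u, v1, v2, v3}"
  have j: "?j < k" using colour_less[OF L(1)] .
  obtain g12 where g12: "g12 < k" "g12 \<noteq> ?j" "1 \<le> \<kappa> g12 {u, v1, v2}"
    using triple_positive_other_colour[OF L u v(1,2,4) B1(1-4) B2(1-4)] .
  obtain g13 where g13: "g13 < k" "g13 \<noteq> ?j" "1 \<le> \<kappa> g13 {u, v1, v3}"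
    using triple_positive_other_colour[OF L u v(1,3,5) B1(1-4) B3(1-4)] .
  obtain g23 where g23: "g23 < k" "g23 \<noteq> ?j" "1 \<le> \<kappa> g23 {u, v2, v3}"
    using triple_positive_other_colour[OF L u v(2,3,6) B2(1-4) B3(1-4)] .
  have "g12 \<noteq> g13"
    using triples_positive_colours_differ[OF g12(1,2) L(1) u v(1,2,3,6) B1(1-3,5)] g12 g13 by blast
  moreover have "g12 \<noteq> g23"
    using triples_positive_colours_differ[OF g12(1,2) L(1) u v(2,1,3) v(5) B2(1-3,5)] g12 g23
    by (auto simp: insert_commute)
  moreover have "g13 \<noteq> g23"
    using triples_positive_colours_differ[OF g13(1,2) L(1) u v(3,1,2) v(4) B3(1-3,5)] g13 g23
    by (auto simp: insert_commute)
  moreover have "3 \<le> \<kappa> ?j ?A" using dual_nullity_fan_ge_3[OF L u v B1] .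
  moreover have "1 \<le> \<kappa> g ?A" if "g < k" "1 \<le> \<kappa> g T" "T \<subseteq> ?A" for g T
    using dual_nullity_mono[OF matroid_rank_r[OF that(1)] that(3)] that(2) by simp
  then have "1 \<le> \<kappa> g12 ?A" "1 \<le> \<kappa> g13 ?A" "1 \<le> \<kappa> g23 ?A" using g12 g13 g23 by auto
  ultimately have "6 \<le> (\<Sum>g\<in>{?j, g12, g13, g23}. \<kappa> g ?A)"
    using g12(2) g13(2) g23(2) by simp
  also have "\<dots> \<le> excess ?A" using j g12 g13 g23 by (intro dual_nullity_le_sum) auto
  also have "\<dots> \<le> 5" by (rule excess_fan_le_5[OF L u v B1(1-3) B2(1-3) B3(1-3)])
  finally show False by simp
qed

text \<open>By transitivity every point of \<open>X\<^sub>L\<close> forms a positive pair with \<open>u\<close>, hence lies on a tight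
  hyperedge of the colour of \<open>L\<close> through \<open>u\<close>; three points would give a fan as in \<open>no_tight_fan\<close>.\<close>
lemma tight_edge_eq_pair:
  assumes L: "L \<in> {1..n}" "slack L = 1" and u: "u \<notin> X L"
    and v0: "v0 \<in> X L" "1 \<le> \<kappa> (colour L) {u, v0}" and v: "v \<in> X L" "v \<noteq> v0"
  shows "X L = {v0, v}"
proof -
  let ?j = "colour L"
  have j: "?j < k" using colour_less[OF L(1)] .
  have spoke: "\<exists>B\<in>{1..n}. u \<in> X B \<and> w \<in> X B \<and> slack B = 1 \<and> colour B = ?j" if w: "w \<in> X L" for w
  proof -
    have "1 \<le> \<kappa> ?j {u, w}"
    proof (cases "w = v0")
      case False
      have "\<kappa> ?j {v0, w} = 1" using dual_nullity_colour[OF L(1), of "{v0, w}"] v0 w L(2) False by simp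
      moreover have "u \<noteq> w" using u w by auto
      ultimately show ?thesis
        using dual_nullity_pair_trans[OF matroid_rank_r[OF j] _ dual_nullity_singleton[OF j] v0(2)] by simp
    qed (use v0 in simp)
    then show ?thesis using dual_nullity_pair_tight_edge[OF j, of u w] u w by metis
  qed
  have "card (X L) \<le> 2"
  proof (rule ccontr)
    assume "\<not> card (X L) \<le> 2"
    then obtain S where "S \<subseteq> X L" "card S = 3" using obtain_subset_with_card_n[of 3 "X L"] by auto
    then obtain v1 v2 v3 where vs: "v1 \<in> X L" "v2 \<in> X L" "v3 \<in> X L" "v1 \<noteq> v2" "v1 \<noteq> v3" "v2 \<noteq> v3"
      by (auto simp: card_3_iff)
    obtain B1 B2 B3 where "B1 \<in> {1..n}" "u \<in> X B1" "v1 \<in> X B1" "slack B1 = 1" "colour B1 = ?j"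
      "B2 \<in> {1..n}" "u \<in> X B2" "v2 \<in> X B2" "slack B2 = 1" "colour B2 = ?j"
      "B3 \<in> {1..n}" "u \<in> X B3" "v3 \<in> X B3" "slack B3 = 1" "colour B3 = ?j"
      using spoke[OF vs(1)] spoke[OF vs(2)] spoke[OF vs(3)] by blast
    then show False using no_tight_fan[OF L u vs] by blast
  qed
  moreover have "{v0, v} \<subseteq> X L" using v0 v by auto
  ultimately show ?thesis using card_seteq[OF finite_edge[OF L(1)]] v(2) by (metis card_2_iff)
qed

text \<open>Otherwise \<open>X m\<close>, \<open>X m'\<close> and the tight hyperedge through their second points would be pairs
  forming a triangle.\<close>
lemma tight_edges_same_colour_disjoint:
  assumes m: "m \<in> {1..n}" "slack m = 1" and m': "m' \<in> {1..n}" "slack m' = 1" and "m \<noteq> m'"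
    and same: "colour m = colour m'" and p: "p \<in> X m" "p \<in> X m'"
  shows False
proof -
  let ?j = "colour m"
  have j: "?j < k" using colour_less[OF m(1)] .
  have meet: "X m \<inter> X m' = {p}" using edges_Int_singleton[OF m(1) m'(1) \<open>m \<noteq> m'\<close> p] .
  obtain x where x: "x \<in> X m" "x \<noteq> p" using edge_other_element[OF m(1)] .
  obtain y where y: "y \<in> X m'" "y \<noteq> p" using edge_other_element[OF m'(1)] .
  have outside: "y \<notin> X m" "x \<notin> X m'" "x \<noteq> y" using x y meet by auto
  have xp: "\<kappa> ?j {x, p} = 1" using dual_nullity_colour[OF m(1), of "{x, p}"] x p m(2) by simp
  have py: "\<kappa> ?j {p, y} = 1" using dual_nullity_colour[OF m'(1), of "{p, y}"] y p m'(2) same by simp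
  have "1 \<le> \<kappa> ?j {x, y}"
    by (rule dual_nullity_pair_trans[OF matroid_rank_r[OF j] outside(3) dual_nullity_singleton[OF j, of p]])
      (use xp py in simp_all)
  then obtain B where B: "B \<in> {1..n}" "x \<in> X B" "y \<in> X B" "slack B = 1" "colour B = ?j"
    using dual_nullity_pair_tight_edge[OF j outside(3)] by blast
  have "p \<notin> X B"
  proof
    assume "p \<in> X B"
    then have "B = m" by (rule edge_eq_through_pair[OF B(1) m(1) x(2) B(2) _ x(1) p(1)])
    then show False using B(3) outside(1) by simp
  qed
  have "X m = {p, x}"
    using tight_edge_eq_pair[OF m outside(1) p(1) _ x] py by (simp add: insert_commute)
  moreover have "X m' = {p, y}"
    using tight_edge_eq_pair[OF m' outside(2) p(2) _ y] xp same by (simp add: insert_commute)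
  moreover have "X B = {x, y}"
    using tight_edge_eq_pair[OF B(1,4) \<open>p \<notin> X B\<close> B(2) _ B(3)] xp B(5) outside(3)
    by (simp add: insert_commute)
  moreover have "p \<in> E" "x \<in> E" "y \<in> E" using p x y edge_subset m(1) m'(1) by auto
  ultimately have "\<exists>a\<in>E. \<exists>b\<in>E. \<exists>c\<in>E. a \<noteq> b \<and> a \<noteq> c \<and> b \<noteq> c
      \<and> (\<exists>i\<in>{1..n}. X i = {a, b}) \<and> (\<exists>i\<in>{1..n}. X i = {a, c}) \<and> (\<exists>i\<in>{1..n}. X i = {b, c})"
    using m(1) m'(1) B(1) x(2) y(2) outside(3) by metis
  then show False using no_pair_triangle by blast
qed

definition tight_crossing :: "'a set \<Rightarrow> 'a set \<Rightarrow> nat set" where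
  "tight_crossing P Q = {m \<in> {1..n}. slack m = 1 \<and> X m \<inter> P \<noteq> {} \<and> X m \<inter> Q \<noteq> {}}"

lemma card_tight_crossing_colour_le:
  assumes g: "g < k" and fin: "finite P" "finite Q" and disj: "P \<inter> Q = {}"
  shows "int (card {m \<in> tight_crossing P Q. colour m = g}) \<le> \<kappa> g (P \<union> Q)"
proof -
  let ?M = "{m \<in> tight_crossing P Q. colour m = g}"
  have rg: "matroid_rank E (r g)" using matroid_rank_r[OF g] .
  have "1 \<le> \<kappa> g ((P \<union> Q) \<inter> X m)" if "m \<in> ?M" for m
  proof -
    from that have "X m \<inter> P \<noteq> {}" "X m \<inter> Q \<noteq> {}" unfolding tight_crossing_def by auto
    then obtain p q where "p \<in> X m \<inter> P" "q \<in> X m \<inter> Q" by blast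
    then have "card {p, q} \<le> card ((P \<union> Q) \<inter> X m)" "p \<noteq> q"
      using fin disj by (auto intro!: card_mono)
    then show ?thesis
      using that dual_nullity_colour[of m "(P \<union> Q) \<inter> X m"] unfolding tight_crossing_def by auto
  qed
  then have "int (card ?M) \<le> (\<Sum>m\<in>?M. \<kappa> g ((P \<union> Q) \<inter> X m))"
    using sum_mono[of ?M "\<lambda>_. 1::int"] by simp
  also have "\<dots> \<le> \<kappa> g (\<Union>m\<in>?M. (P \<union> Q) \<inter> X m)"
  proof (rule dual_nullity_UN_disjoint_ge[OF rg])
    show "finite ?M" unfolding tight_crossing_def by simp
    show "\<forall>m\<in>?M. \<forall>m'\<in>?M. m \<noteq> m' \<longrightarrow> (P \<union> Q) \<inter> X m \<inter> ((P \<union> Q) \<inter> X m') = {}"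
      using tight_edges_same_colour_disjoint unfolding tight_crossing_def by blast
  qed
  also have "\<dots> \<le> \<kappa> g (P \<union> Q)" by (rule dual_nullity_mono[OF rg]) auto
  finally show ?thesis .
qed

lemma sum_card_colour_classes:
  assumes "M \<subseteq> {1..n}"
  shows "(\<Sum>g<k. card {m \<in> M. colour m = g}) = card M"
proof -
  have "(\<Sum>g<k. card {m \<in> M. colour m = g}) = (\<Sum>g<k. \<Sum>m\<in>{m \<in> M. colour m = g}. 1)" by simp
  also have "\<dots> = (\<Sum>m\<in>M. 1)"
  proof (rule sum.group)
    show "finite M" using assms finite_subset by blast
    show "colour ` M \<subseteq> {..<k}" using assms colour_less by auto
  qed simp
  finally show ?thesis by simp
qed

context
  fixes i l e P Q
  assumes i: "i \<in> {1..n}" and l: "l \<in> {1..n}" "i \<noteq> l" and e: "e \<in> X i" "e \<in> X l"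
    and P: "P \<subseteq> X i - {e}" "int (card P) = slack i"
    and Q: "Q \<subseteq> X l - {e}" "int (card Q) = slack l"
begin

lemma crossing_disjoint: "P \<inter> Q = {}" "P \<inter> X l = {}" "Q \<inter> X i = {}"
  using edges_Int_singleton[OF i l e] P Q by auto

lemma crossing_finite: "finite P" "finite Q"
  using finite_subset[of P "X i"] finite_subset[of Q "X l"] P(1) Q(1) finite_edge[OF i] finite_edge[OF l(1)]
  by auto

lemma dual_nullity_crossing_pos:
  assumes same: "colour i = colour l"
  shows "1 \<le> \<kappa> (colour i) (P \<union> Q)"
proof -
  let ?j = "colour i"
  have rj: "matroid_rank E (r ?j)" using matroid_rank_r[OF colour_less[OF i]] .
  have "e \<notin> P" "P \<subseteq> X i" "e \<notin> Q" "Q \<subseteq> X l" using P(1) Q(1) by auto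
  then have "\<kappa> ?j (insert e P) = 1" "\<kappa> ?j (insert e Q) = 1"
    using dual_nullity_colour[OF i, of "insert e P"] dual_nullity_colour[OF l(1), of "insert e Q"]
      P(2) Q(2) e crossing_finite same by auto
  moreover have sets: "insert e P \<union> insert e Q = insert e (P \<union> Q)" "insert e P \<inter> insert e Q = {e}"
    using crossing_disjoint by auto
  have "\<kappa> ?j (insert e P) + \<kappa> ?j (insert e Q) \<le> \<kappa> ?j (insert e (P \<union> Q)) + \<kappa> ?j {e}"
    using dual_nullity_supermod[OF rj, of "insert e P" "insert e Q"] unfolding sets .
  moreover have "\<kappa> ?j (insert e (P \<union> Q)) \<le> \<kappa> ?j (P \<union> Q) + 1" by (rule dual_nullity_insert_le[OF rj])
  ultimately show ?thesis using dual_nullity_singleton[OF colour_less[OF i]] by simp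
qed

lemma edge_excess_crossing:
  assumes m: "m \<in> {1..n}"
  shows "edge_excess m (P \<union> Q) \<le> (if m \<in> tight_crossing P Q then 1 else 0)"
proof (cases "m = i \<or> m = l")
  case True
  then have "(P \<union> Q) \<inter> X m = P \<and> m = i \<or> (P \<union> Q) \<inter> X m = Q \<and> m = l"
    using P Q crossing_disjoint by auto
  then show ?thesis unfolding edge_excess_def using P Q by auto
next
  case False
  have "card ((P \<union> Q) \<inter> X m) \<le> card (P \<inter> X m) + card (Q \<inter> X m)"
    by (metis Int_Un_distrib2 card_Un_le)
  moreover have "card (P \<inter> X m) \<le> 1" "card (Q \<inter> X m) \<le> 1"
    using card_Int_other_edge_le_1[OF i m, of P] card_Int_other_edge_le_1[OF l(1) m, of Q] P Q False by auto
  ultimately have c2: "card ((P \<union> Q) \<inter> X m) \<le> 2" by simp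
  show ?thesis
  proof (cases "m \<in> tight_crossing P Q")
    case True
    then have "slack m = 1" unfolding tight_crossing_def by auto
    then show ?thesis using c2 True unfolding edge_excess_def by auto
  next
    case outside: False
    then have "P \<inter> X m = {} \<or> Q \<inter> X m = {} \<or> 2 \<le> slack m"
      using slack_ge_1[OF m] m unfolding tight_crossing_def by fastforce
    then have "int (card ((P \<union> Q) \<inter> X m)) \<le> slack m"
      using c2 \<open>card (P \<inter> X m) \<le> 1\<close> \<open>card (Q \<inter> X m) \<le> 1\<close> slack_ge_1[OF m]
        \<open>card ((P \<union> Q) \<inter> X m) \<le> card (P \<inter> X m) + card (Q \<inter> X m)\<close>
      by (elim disjE) auto
    then show ?thesis using outside unfolding edge_excess_def by auto
  qed
qed

lemma excess_crossing_le: "excess (P \<union> Q) \<le> int (card (tight_crossing P Q))"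
proof -
  have "excess (P \<union> Q) \<le> (\<Sum>m\<in>{1..n}. if m \<in> tight_crossing P Q then 1 else 0)"
    unfolding excess_def by (rule sum_mono) (rule edge_excess_crossing)
  also have "\<dots> = int (card ({1..n} \<inter> tight_crossing P Q))" by (simp add: sum.If_cases)
  also have "{1..n} \<inter> tight_crossing P Q = tight_crossing P Q" unfolding tight_crossing_def by auto
  finally show ?thesis .
qed

text \<open>The key counting argument: each tight hyperedge crossing from \<open>P\<close> to \<open>Q\<close> contributes
  one unit of excess and one unit of dual nullity in its own colour, while the common colour of
  \<open>X\<^sub>i\<close> and \<open>X\<^sub>l\<close> contributes one more unit of dual nullity.\<close>
lemma crossing_has_colour:
  assumes same: "colour i = colour l"
  obtains m where "m \<in> tight_crossing P Q" "colour m = colour i"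
proof (rule ccontr)
  let ?T = "tight_crossing P Q" and ?j = "colour i"
  assume "\<not> thesis"
  then have "{m \<in> ?T. colour m = ?j} = {}" using that by blast
  then have none: "card {m \<in> ?T. colour m = ?j} = 0" by (simp only: card.empty)
  have j: "?j < k" using colour_less[OF i] .
  have bound: "int (card {m \<in> ?T. colour m = g}) \<le> \<kappa> g (P \<union> Q)" if "g < k" for g
    using card_tight_crossing_colour_le[OF that crossing_finite crossing_disjoint(1)] .
  have "?T \<subseteq> {1..n}" unfolding tight_crossing_def by auto
  then have "card ?T = (\<Sum>g\<in>{..<k} - {?j}. card {m \<in> ?T. colour m = g})"
    using sum_card_colour_classes sum.remove[of "{..<k}" ?j "\<lambda>g. card {m \<in> ?T. colour m = g}"] j none
    by simp
  then have "int (card ?T) = (\<Sum>g\<in>{..<k} - {?j}. int (card {m \<in> ?T. colour m = g}))" by simp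
  also have "\<dots> \<le> (\<Sum>g\<in>{..<k} - {?j}. \<kappa> g (P \<union> Q))" using bound by (intro sum_mono) auto
  also have "\<dots> < \<kappa> ?j (P \<union> Q) + (\<Sum>g\<in>{..<k} - {?j}. \<kappa> g (P \<union> Q))"
    using dual_nullity_crossing_pos[OF same] by simp
  also have "\<dots> = excess (P \<union> Q)"
    using sum.remove[of "{..<k}" ?j "\<lambda>g. \<kappa> g (P \<union> Q)"] j sum_dual_nullity_eq_excess by simp
  finally show False using excess_crossing_le by simp
qed

end

lemma subset_card_slack:
  assumes i: "i \<in> {1..n}" and e: "e \<in> X i"
  obtains P where "P \<subseteq> X i - {e}" "int (card P) = slack i"
proof -
  have "card (X i - {e}) = card (X i) - 1" using e finite_edge[OF i] by simp
  then have "nat (slack i) \<le> card (X i - {e})"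
    using t_pos slack_ge_1[OF i] e finite_edge[OF i] i unfolding slack_def by (force simp: card_gt_0_iff)
  then obtain P where "P \<subseteq> X i - {e}" "card P = nat (slack i)" using obtain_subset_with_card_n by metis
  then show ?thesis using that slack_ge_1[OF i] by simp
qed

lemma tight_adjacent_colours_differ:
  assumes i: "i \<in> {1..n}" and l: "l \<in> {1..n}" "i \<noteq> l" and e: "e \<in> X i" "e \<in> X l"
    and tight: "slack l = 1"
  shows "colour i \<noteq> colour l"
proof
  assume same: "colour i = colour l"
  obtain P where P: "P \<subseteq> X i - {e}" "int (card P) = slack i" using subset_card_slack[OF i e(1)] .
  obtain q where q: "q \<in> X l" "q \<noteq> e" using edge_other_element[OF l(1)] .
  have Q: "{q} \<subseteq> X l - {e}" "int (card {q}) = slack l" using q tight by auto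
  obtain m where m: "m \<in> tight_crossing P {q}" "colour m = colour i"
    using crossing_has_colour[OF i l e P Q same] .
  then have "m \<noteq> l" using crossing_disjoint(2)[OF i l e P Q] unfolding tight_crossing_def by auto
  then show False
    using tight_edges_same_colour_disjoint[OF _ _ l(1) tight, of m q] m same q(1)
    unfolding tight_crossing_def by auto
qed

lemma adjacent_colours_differ:
  assumes i: "i \<in> {1..n}" and l: "l \<in> {1..n}" and adj: "line_graph_adj X i l"
  shows "colour i \<noteq> colour l"
proof
  assume same: "colour i = colour l"
  obtain e where e: "e \<in> X i" "e \<in> X l" and "i \<noteq> l" using adj unfolding line_graph_adj_def by blast
  obtain P where P: "P \<subseteq> X i - {e}" "int (card P) = slack i" using subset_card_slack[OF i e(1)] .
  obtain Q where Q: "Q \<subseteq> X l - {e}" "int (card Q) = slack l" using subset_card_slack[OF l e(2)] .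
  obtain m where m: "m \<in> tight_crossing P Q" "colour m = colour i"
    using crossing_has_colour[OF i l \<open>i \<noteq> l\<close> e P Q same] .
  then obtain p where p: "p \<in> X m" "p \<in> P" and "m \<noteq> i" "m \<in> {1..n}" "slack m = 1"
    using crossing_disjoint(3)[OF i l \<open>i \<noteq> l\<close> e P Q] unfolding tight_crossing_def by auto
  then show False
    using tight_adjacent_colours_differ[OF i \<open>m \<in> {1..n}\<close> _ _ p(1)] m(2) P by auto
qed

lemma colourable_line_graph: "colourable {1..n} (line_graph_adj X) k"
  unfolding colourable_def using colour_less adjacent_colours_differ by blast

end

lemma Min_hdeg_edge_ge_2:
  assumes "hypergraph E n X" "\<forall>e\<in>E. 2 \<le> hdeg n X e" "i \<in> {1..n}"
  shows "2 \<le> Min (hdeg n X ` X i)"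
proof -
  have "X i \<noteq> {}" "X i \<subseteq> E" "finite E" using assms(1,3) unfolding hypergraph_def by auto
  then show ?thesis using assms(2) finite_subset[of "X i" E] by (subst Min_ge_iff) auto
qed

theorem corollary2p11:
  fixes E :: "'a set" and n k :: nat and X :: "nat \<Rightarrow> 'a set" and t :: "nat \<Rightarrow> int"
  assumes hyp: "hypergraph E n X"
    and t_range: "\<forall>i\<in>{1..n}. 0 \<le> t i \<and> t i \<le> int (card (X i))"
    and H1: "\<forall>e\<in>E. hdeg n X e \<ge> 2"
    and H2: "\<forall>i\<in>{1..n}. \<forall>j\<in>{1..n}. i \<noteq> j \<longrightarrow> card (X i \<inter> X j) \<le> 1"
    and H3: "\<not> (\<exists>a\<in>E. \<exists>b\<in>E. \<exists>c\<in>E. a \<noteq> b \<and> a \<noteq> c \<and> b \<noteq> c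
                 \<and> (\<exists>i\<in>{1..n}. X i = {a, b}) \<and> (\<exists>i\<in>{1..n}. X i = {a, c})
                 \<and> (\<exists>i\<in>{1..n}. X i = {b, c}))"
    and T: "\<forall>i\<in>{1..n}. t i = 1 \<or>
              (int (Min (hdeg n X ` X i)) \<le> t i \<and> t i < int (card (X i)))"
    and crit: "critical (k + 1) {1..n} (line_graph_adj X)"
  shows "excluded_minor_D k E (truncated_rho n X t)"
proof -
  have "\<forall>i\<in>{1..n}. 1 \<le> t i" using T Min_hdeg_edge_ge_2[OF hyp H1] by force
  then interpret truncated_hypergraph E n X t using hyp H1 H2 by unfold_locales auto
  have "\<not> in_D k E \<rho>"
  proof
    assume D: "in_D k E \<rho>"
    show False
    proof (cases "\<exists>i\<in>{1..n}. card (X i) = 1")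
      case True
      then show False using singleton_edge_not_in_D[OF crit D] by blast
    next
      case False
      then have "\<forall>i\<in>{1..n}. t i < int (card (X i))" using T card_edge_pos by force
      moreover obtain r where "\<forall>j<k. matroid_rank E (r j)" "\<forall>Z. Z \<subseteq> E \<longrightarrow> \<rho> Z = (\<Sum>j<k. r j Z)"
        using D unfolding in_D_def by blast
      ultimately interpret rho_decomposition E n X t k r using H3 by unfold_locales auto
      show False using colourable_line_graph critical_not_colourable[OF crit] by blast
    qed
  qed
  then show ?thesis
    unfolding excluded_minor_D_def using polymatroid_rho proper_minors_in_D[OF crit] by blast
qed

end
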